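(* Let $u_0,\dots,u_{n-2}$ be unitaries on $(\mathbb{C}^2)^{\otimes n}$ with $u_t$ acting on qubits $t,t+1$. Define propagators $U_{t_2:t_1}=u_{t_2-1}\cdots u_{t_1}$ if $t_2>t_1$, $U_{t:t}=\mathbb{1}$, and $U_{t_2:t_1}=u_{t_2}^\dagger\cdots u_{t_1-1}^\dagger$ if $t_2<t_1$. For a strictly increasing tuple $\mathbf t=(t_1<\dots<t_M)$ in $\{0,\dots,n-1\}$ let $U_{\mathbf t:0}=U_{t_1:0}U_{t_2:0}\cdots U_{t_M:0}$. Then for any two such tuples $\mathbf t,\mathbf t'$ of the same length $M$, $$U_{\mathbf t:0}=V\,U_{\mathbf s:0},\qquad U_{\mathbf t':0}=W\,U_{\mathbf s:0},$$ where $\mathbf s=(\max(t_1,t'_1),\dots,\max(t_M,t'_M))$ and $$V=\prod_{j:\,t_j<t'_j}U_{t_j:t'_j},\qquad W=\prod_{j:\,t_j>t'_j}U_{t'_j:t_j},$$ with the products ordered from small $j$ on the right to large $j$ on the left. *)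

theory Defs
  imports "Jordan_Normal_Form.Schur_Decomposition"
begin

text \<open>Operators on (C^2)^{tensor n} are complex 2^n x 2^n matrices; qubit 0 is the
leftmost tensor factor (most significant bit of the basis index).\<close>

definition kron :: "complex mat \<Rightarrow> complex mat \<Rightarrow> complex mat" where
  "kron A B = mat (dim_row A * dim_row B) (dim_col A * dim_col B)
     (\<lambda>(i,j). A $$ (i div dim_row B, j div dim_col B) * B $$ (i mod dim_row B, j mod dim_col B))"

definition unitary_mat :: "nat \<Rightarrow> complex mat \<Rightarrow> bool" where
  "unitary_mat N A \<longleftrightarrow> A \<in> carrier_mat N N \<and> A * mat_adjoint A = 1\<^sub>m N \<and> mat_adjoint A * A = 1\<^sub>m N"

definition acts_on_qubits :: "nat \<Rightarrow> nat \<Rightarrow> complex mat \<Rightarrow> bool" where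
  "acts_on_qubits n t u \<longleftrightarrow>
     (\<exists>g \<in> carrier_mat 4 4. u = kron (1\<^sub>m (2^t)) (kron g (1\<^sub>m (2^(n - t - 2)))))"

definition prodm :: "nat \<Rightarrow> complex mat list \<Rightarrow> complex mat" where
  "prodm N As = foldr (*) As (1\<^sub>m N)"

definition propag :: "nat \<Rightarrow> (nat \<Rightarrow> complex mat) \<Rightarrow> nat \<Rightarrow> nat \<Rightarrow> complex mat" where
  "propag N u t2 t1 =
     (if t1 < t2 then prodm N (rev (map u [t1..<t2]))
      else if t2 = t1 then 1\<^sub>m N
      else prodm N (map (\<lambda>k. mat_adjoint (u k)) [t2..<t1]))"

definition prop_tuple :: "nat \<Rightarrow> (nat \<Rightarrow> complex mat) \<Rightarrow> nat list \<Rightarrow> complex mat" where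
  "prop_tuple N u ts = prodm N (map (\<lambda>k. propag N u k 0) ts)"

end

theory Submission
  imports Defs
begin

(* Induct on M, peeling off the last entries a = t_M and b = t'_M; nothing changes unless a < b.
   Then U_{b:0} = R U_{a:0} with R = U_{b:a} = u_{b-1} ... u_a, and U_{a:b} R = 1 by unitarity.
   The gates of R act on qubits >= a, while every earlier factor U_{t_j:0}, t_j < a, only involves
   gates on qubits <= a - 1, so R commutes with X = U_{(t_1,...,t_{M-1}):0} and
   X U_{a:0} = U_{a:b} R X U_{a:0} = U_{a:b} X U_{b:0}.
   The second identity is the first one with t and t' exchanged. *)

lemma sum_lessThan_mult_nat_split:
  fixes h :: "nat \<Rightarrow> 'a::comm_monoid_add"
  shows "(\<Sum>l<b * d. h l) = (\<Sum>x<b. \<Sum>y<d. h (x * d + y))"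
proof -
  have "(\<Sum>l<b * d. h l) = (\<Sum>x<b. \<Sum>l\<in>{x * d..<x * d + d}. h l)"
    by (rule sum.nat_group[symmetric])
  also have "\<dots> = (\<Sum>x<b. \<Sum>y<d. h (x * d + y))"
    by (simp add: sum.atLeastLessThan_shift_0[where m = "_ * d"] atLeast0LessThan comp_def)
  finally show ?thesis .
qed

lemma map_filter_nth_upt_eq_zip:
  assumes "length xs = length ys"
  shows "map (\<lambda>j. f (xs ! j) (ys ! j)) (filter (\<lambda>j. P (xs ! j) (ys ! j)) [0..<length xs])
    = map (\<lambda>(x, y). f x y) (filter (\<lambda>(x, y). P x y) (zip xs ys))"
proof -
  have "zip xs ys = map (\<lambda>j. (xs ! j, ys ! j)) [0..<length xs]"
    using assms by (intro nth_equalityI) auto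
  then show ?thesis
    by (simp add: filter_map comp_def)
qed

lemma dim_row_kron [simp]: "dim_row (kron A B) = dim_row A * dim_row B"
  and dim_col_kron [simp]: "dim_col (kron A B) = dim_col A * dim_col B"
  by (simp_all add: kron_def)

lemma index_kron [simp]:
  "i < dim_row A * dim_row B \<Longrightarrow> j < dim_col A * dim_col B \<Longrightarrow>
   kron A B $$ (i, j) = A $$ (i div dim_row B, j div dim_col B) * B $$ (i mod dim_row B, j mod dim_col B)"
  by (simp add: kron_def)

lemma kron_carrier_mat: "A \<in> carrier_mat a b \<Longrightarrow> B \<in> carrier_mat c d \<Longrightarrow> kron A B \<in> carrier_mat (a * c) (b * d)"
  by auto

lemma kron_mult:
  assumes A: "A \<in> carrier_mat a b" and B: "B \<in> carrier_mat c d"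
    and C: "C \<in> carrier_mat b e" and D: "D \<in> carrier_mat d f"
  shows "kron A B * kron C D = kron (A * C) (B * D)"
proof (rule eq_matI)
  fix i j assume "i < dim_row (kron (A * C) (B * D))" and "j < dim_col (kron (A * C) (B * D))"
  then have i: "i < a * c" and j: "j < e * f" using A B C D by auto
  then have "0 < c" "0 < f"
    by (auto intro!: gr0I)
  with i j have ic: "i div c < a" "i mod c < c" and jf: "j div f < e" "j mod f < f"
    by (auto simp: less_mult_imp_div_less)
  have "(kron A B * kron C D) $$ (i, j) = (\<Sum>l<b * d. kron A B $$ (i, l) * kron C D $$ (l, j))"
    using A B C D i j by (simp add: scalar_prod_def lessThan_atLeast0)
  also have "\<dots> = (\<Sum>x<b. \<Sum>y<d. (A $$ (i div c, x) * C $$ (x, j div f)) * (B $$ (i mod c, y) * D $$ (y, j mod f)))"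
    unfolding sum_lessThan_mult_nat_split
  proof (intro sum.cong refl)
    fix x y assume x: "x \<in> {..<b}" and y: "y \<in> {..<d}"
    have "x * d + y < (x + 1) * d" using y by simp
    also have "\<dots> \<le> b * d" using x by (intro mult_le_mono1) simp
    finally have "x * d + y < b * d" .
    then show "kron A B $$ (i, x * d + y) * kron C D $$ (x * d + y, j) =
        (A $$ (i div c, x) * C $$ (x, j div f)) * (B $$ (i mod c, y) * D $$ (y, j mod f))"
      using A B C D i j y by (simp add: algebra_simps)
  qed
  also have "\<dots> = kron (A * C) (B * D) $$ (i, j)"
    using A B C D i j ic jf by (simp add: scalar_prod_def lessThan_atLeast0 sum_product)
  finally show "(kron A B * kron C D) $$ (i, j) = kron (A * C) (B * D) $$ (i, j)" .
qed (use A B C D in auto)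

lemma kron_assoc: "kron A (kron B C) = kron (kron A B) C"
proof (rule eq_matI)
  let ?rB = "dim_row B" and ?rC = "dim_row C" and ?cB = "dim_col B" and ?cC = "dim_col C"
  fix i j assume "i < dim_row (kron (kron A B) C)" and "j < dim_col (kron (kron A B) C)"
  then have i: "i < dim_row A * (?rB * ?rC)" and j: "j < dim_col A * (?cB * ?cC)"
    by (simp_all add: ac_simps)
  then have pos: "0 < ?rB" "0 < ?rC" "0 < ?cB" "0 < ?cC"
    by (auto intro!: gr0I)
  have div: "i div (?rB * ?rC) = i div ?rC div ?rB" "j div (?cB * ?cC) = j div ?cC div ?cB"
    by (metis div_mult2_eq mult.commute)+
  have "i mod (?rB * ?rC) = ?rC * (i div ?rC mod ?rB) + i mod ?rC"
    and "j mod (?cB * ?cC) = ?cC * (j div ?cC mod ?cB) + j mod ?cC"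
    by (metis mod_mult2_eq mult.commute)+
  then have mod_div: "i mod (?rB * ?rC) div ?rC = i div ?rC mod ?rB"
    "j mod (?cB * ?cC) div ?cC = j div ?cC mod ?cB"
    using pos by simp_all
  have "i div ?rC < dim_row A * ?rB" "j div ?cC < dim_col A * ?cB"
    "i mod (?rB * ?rC) < ?rB * ?rC" "j mod (?cB * ?cC) < ?cB * ?cC"
    using i j pos by (simp_all add: less_mult_imp_div_less ac_simps)
  then show "kron A (kron B C) $$ (i, j) = kron (kron A B) C $$ (i, j)"
    using i j by (simp add: div mod_div mod_mod_cancel ac_simps)
qed auto

lemma kron_one_mat: "kron (1\<^sub>m a) (1\<^sub>m b) = 1\<^sub>m (a * b)"
proof (rule eq_matI)
  fix i j assume "i < dim_row (1\<^sub>m (a * b))" and "j < dim_col (1\<^sub>m (a * b))"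
  then have ij: "i < a * b" "j < a * b" by simp_all
  then have "0 < b" by (auto intro!: gr0I)
  moreover have "i = j \<longleftrightarrow> i div b = j div b \<and> i mod b = j mod b"
    by (metis div_mult_mod_eq)
  ultimately show "kron (1\<^sub>m a) (1\<^sub>m b) $$ (i, j) = 1\<^sub>m (a * b) $$ (i, j)"
    using ij by (auto simp: less_mult_imp_div_less)
qed auto

lemma kron_one_mat_mult: "kron (1\<^sub>m (a * b)) C = kron (1\<^sub>m a) (kron (1\<^sub>m b) C)"
  by (simp add: kron_assoc kron_one_mat)

lemma kron_one_mat_mult_kron_one_mat:
  "X \<in> carrier_mat m m \<Longrightarrow> Y \<in> carrier_mat m m \<Longrightarrow> kron (1\<^sub>m p) X * kron (1\<^sub>m p) Y = kron (1\<^sub>m p) (X * Y)"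
  by (simp add: kron_mult[of _ p p _ m m _ p _ m])

lemma kron_one_mat_commute:
  assumes "A \<in> carrier_mat k k" and "B \<in> carrier_mat m m"
  shows "kron A (1\<^sub>m m) * kron (1\<^sub>m k) B = kron (1\<^sub>m k) B * kron A (1\<^sub>m m)"
  using assms by (simp add: kron_mult[of _ k k _ m m _ k _ m])

lemma acts_on_qubits_commute:
  assumes A: "acts_on_qubits n k A" and B: "acts_on_qubits n l B" and kl: "k + 2 \<le> l" and ln: "l + 2 \<le> n"
  shows "A * B = B * A"
proof -
  obtain g where g: "g \<in> carrier_mat 4 4" and A_eq: "A = kron (1\<^sub>m (2^k)) (kron g (1\<^sub>m (2^(n-k-2))))"
    using A by (auto simp: acts_on_qubits_def)
  obtain h where h: "h \<in> carrier_mat 4 4" and B_eq: "B = kron (1\<^sub>m (2^l)) (kron h (1\<^sub>m (2^(n-l-2))))"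
    using B by (auto simp: acts_on_qubits_def)
  define r where "r = l - k - 2"
  define Z where "Z = kron (1\<^sub>m (2^r)) (kron h (1\<^sub>m (2^(n-l-2))))"
  have "n - k - 2 = r + (2 + (n - l - 2))" and "l = k + (2 + r)"
    using kl ln by (simp_all add: r_def)
  then have q: "(2::nat)^(n-k-2) = 2^r * (4 * 2^(n-l-2))" and "(2::nat)^l = 2^k * (4 * 2^r)"
    by (simp_all only: power_add) simp_all
  then have B_eq': "B = kron (1\<^sub>m (2^k)) (kron (1\<^sub>m 4) Z)"
    by (simp add: B_eq Z_def kron_one_mat_mult)
  have Z: "Z \<in> carrier_mat (2^(n-k-2)) (2^(n-k-2))"
    unfolding q Z_def using h by (intro kron_carrier_mat) auto
  have "kron g (1\<^sub>m (2^(n-k-2))) * kron (1\<^sub>m 4) Z = kron (1\<^sub>m 4) Z * kron g (1\<^sub>m (2^(n-k-2)))"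
    using g Z by (rule kron_one_mat_commute)
  then show ?thesis
    using g Z by (simp add: A_eq B_eq' kron_one_mat_mult_kron_one_mat[of _ "4 * 2^(n-k-2)"] kron_carrier_mat)
qed

lemma mat_adjoint_carrier_mat: "A \<in> carrier_mat m k \<Longrightarrow> mat_adjoint A \<in> carrier_mat k m"
  by (auto simp: mat_adjoint_def)

lemma prodm_Nil [simp]: "prodm N [] = 1\<^sub>m N"
  and prodm_Cons [simp]: "prodm N (A # As) = A * prodm N As"
  by (simp_all add: prodm_def)

lemma prodm_carrier_mat: "set As \<subseteq> carrier_mat N N \<Longrightarrow> prodm N As \<in> carrier_mat N N"
  by (induction As) auto

lemma prodm_append:
  assumes "set As \<subseteq> carrier_mat N N" and "set Bs \<subseteq> carrier_mat N N"
  shows "prodm N (As @ Bs) = prodm N As * prodm N Bs"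
  using assms
proof (induction As)
  case (Cons A As)
  then show ?case
    using prodm_carrier_mat[of As N] prodm_carrier_mat[of Bs N] by (simp add: assoc_mult_mat[of A N N _ N _ N])
qed (metis prodm_carrier_mat left_mult_one_mat append_Nil prodm_Nil)

lemma prodm_snoc: "set As \<subseteq> carrier_mat N N \<Longrightarrow> A \<in> carrier_mat N N \<Longrightarrow> prodm N (As @ [A]) = prodm N As * A"
  by (simp add: prodm_append)

lemma prodm_commute:
  assumes "A \<in> carrier_mat N N" and "set Bs \<subseteq> carrier_mat N N" and "\<forall>B\<in>set Bs. A * B = B * A"
  shows "A * prodm N Bs = prodm N Bs * A"
  using assms
proof (induction Bs)
  case (Cons B Bs)
  then have B: "B \<in> carrier_mat N N" and Bs: "prodm N Bs \<in> carrier_mat N N"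
    by (auto simp: prodm_carrier_mat)
  have "A * (B * prodm N Bs) = (A * B) * prodm N Bs"
    using Cons.prems(1) B Bs by simp
  also have "\<dots> = B * (A * prodm N Bs)"
    using Cons.prems B Bs by simp
  also have "\<dots> = (B * prodm N Bs) * A"
    using Cons Bs B by simp
  finally show ?case by simp
qed simp

lemma prodm_adjoint_mult_prodm_rev:
  assumes "\<forall>A\<in>set As. A \<in> carrier_mat N N \<and> mat_adjoint A * A = 1\<^sub>m N"
  shows "prodm N (map mat_adjoint As) * prodm N (rev As) = 1\<^sub>m N"
  using assms
proof (induction As)
  case (Cons A As)
  let ?P = "prodm N (map mat_adjoint As)" and ?Q = "prodm N (rev As)"
  have A: "A \<in> carrier_mat N N" "mat_adjoint A \<in> carrier_mat N N" and "mat_adjoint A * A = 1\<^sub>m N"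
    using Cons.prems by (auto simp: mat_adjoint_carrier_mat)
  moreover have "?P \<in> carrier_mat N N" "?Q \<in> carrier_mat N N"
    using Cons.prems by (auto intro!: prodm_carrier_mat simp: mat_adjoint_carrier_mat)
  moreover have "prodm N (rev (A # As)) = ?Q * A"
    using Cons.prems prodm_snoc[of "rev As" N A] by auto
  ultimately have "prodm N (map mat_adjoint (A # As)) * prodm N (rev (A # As)) = mat_adjoint A * ((?P * ?Q) * A)"
    by (simp add: assoc_mult_mat[of _ N N _ N _ N])
  then show ?case
    using Cons A by simp
qed simp

lemma propag_forward: "a \<le> b \<Longrightarrow> propag N u b a = prodm N (rev (map u [a..<b]))"
  by (auto simp: propag_def)

lemma propag_backward: "a \<le> b \<Longrightarrow> propag N u a b = prodm N (map (\<lambda>k. mat_adjoint (u k)) [a..<b])"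
  by (auto simp: propag_def)

locale nearest_neighbour_circuit =
  fixes n :: nat and u :: "nat \<Rightarrow> complex mat"
  assumes unitary: "\<And>k. k < n - 1 \<Longrightarrow> unitary_mat (2^n) (u k)"
    and local: "\<And>k. k < n - 1 \<Longrightarrow> acts_on_qubits n k (u k)"
begin

lemma gate_carrier_mat: "k < n - 1 \<Longrightarrow> u k \<in> carrier_mat (2^n) (2^n)"
  using unitary by (simp add: unitary_mat_def)

lemma gates_commute: "k + 2 \<le> l \<Longrightarrow> l < n - 1 \<Longrightarrow> u k * u l = u l * u k"
  by (rule acts_on_qubits_commute[OF local local]) auto

lemma propag_carrier_mat: "a \<le> n - 1 \<Longrightarrow> b \<le> n - 1 \<Longrightarrow> propag (2^n) u a b \<in> carrier_mat (2^n) (2^n)"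
  unfolding propag_def by (auto intro!: prodm_carrier_mat gate_carrier_mat mat_adjoint_carrier_mat)

lemma propag_split:
  assumes "c \<le> a" "a \<le> b" "b \<le> n - 1"
  shows "propag (2^n) u b c = propag (2^n) u b a * propag (2^n) u a c"
proof -
  have "[c..<b] = [c..<a] @ [a..<b]"
    using assms by (metis le_add_diff_inverse upt_add_eq_append)
  then show ?thesis
    using assms by (simp add: propag_forward, intro prodm_append) (auto intro!: gate_carrier_mat)
qed

lemma propag_inverse:
  assumes "a \<le> b" "b \<le> n - 1"
  shows "propag (2^n) u a b * propag (2^n) u b a = 1\<^sub>m (2^n)"
proof -
  have "\<forall>A\<in>set (map u [a..<b]). A \<in> carrier_mat (2^n) (2^n) \<and> mat_adjoint A * A = 1\<^sub>m (2^n)"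
    using assms unitary by (auto simp: unitary_mat_def)
  from prodm_adjoint_mult_prodm_rev[OF this] show ?thesis
    using assms by (simp add: propag_forward propag_backward comp_def)
qed

lemma propag_commute:
  assumes "c < a" "a \<le> b" "b \<le> n - 1"
  shows "propag (2^n) u b a * propag (2^n) u c 0 = propag (2^n) u c 0 * propag (2^n) u b a"
proof -
  have "u k * propag (2^n) u c 0 = propag (2^n) u c 0 * u k" if "a \<le> k" "k < b" for k
    using assms that unfolding propag_forward[OF le0]
    by (intro prodm_commute) (auto intro!: gate_carrier_mat gates_commute[symmetric])
  then show ?thesis
    using assms unfolding propag_forward[OF \<open>a \<le> b\<close>]
    by (intro prodm_commute[symmetric]) (auto intro!: gate_carrier_mat propag_carrier_mat)
qed

lemma prop_tuple_carrier_mat: "set ts \<subseteq> {0..n-1} \<Longrightarrow> prop_tuple (2^n) u ts \<in> carrier_mat (2^n) (2^n)"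
  unfolding prop_tuple_def by (auto intro!: prodm_carrier_mat propag_carrier_mat simp: subset_iff)

lemma prop_tuple_snoc:
  "set ts \<subseteq> {0..n-1} \<Longrightarrow> c \<le> n - 1 \<Longrightarrow> prop_tuple (2^n) u (ts @ [c]) = prop_tuple (2^n) u ts * propag (2^n) u c 0"
  unfolding prop_tuple_def by (auto intro!: prodm_snoc propag_carrier_mat simp: subset_iff)

lemma propag_commute_prop_tuple:
  assumes "\<forall>c\<in>set ts. c < a" "a \<le> b" "b \<le> n - 1"
  shows "propag (2^n) u b a * prop_tuple (2^n) u ts = prop_tuple (2^n) u ts * propag (2^n) u b a"
  unfolding prop_tuple_def using assms
  by (intro prodm_commute) (auto intro!: propag_carrier_mat propag_commute)

lemma prop_tuple_factor_max:
  assumes "length t = length t'" and "sorted_wrt (<) t" and "set t \<subseteq> {0..n-1}" and "set t' \<subseteq> {0..n-1}"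
  shows "prop_tuple (2^n) u t =
    prodm (2^n) (rev (map (\<lambda>(x, y). propag (2^n) u x y) (filter (\<lambda>(x, y). x < y) (zip t t'))))
    * prop_tuple (2^n) u (map2 max t t')"
  using assms
proof (induction t arbitrary: t' rule: rev_induct)
  case Nil
  then show ?case by (simp add: prop_tuple_def)
next
  case (snoc a t0)
  obtain t0' b where t': "t' = t0' @ [b]" and len: "length t0 = length t0'"
    using snoc.prems(1) by (cases t' rule: rev_cases) auto
  have below: "\<forall>c\<in>set t0. c < a" and sorted: "sorted_wrt (<) t0"
    using snoc.prems(2) by (auto simp: sorted_wrt_append)
  have range: "set t0 \<subseteq> {0..n-1}" "set t0' \<subseteq> {0..n-1}" "a \<le> n - 1" "b \<le> n - 1"
    using snoc.prems(3,4) t' by auto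
  have pairs: "x \<le> n - 1 \<and> y \<le> n - 1" if "(x, y) \<in> set (zip t0 t0')" for x y
    using range(1,2) set_zip_leftD[OF that] set_zip_rightD[OF that] by auto
  then have range_max: "set (map2 max t0 t0') \<subseteq> {0..n-1}"
    by (auto simp: max_def)
  define X where "X = prop_tuple (2^n) u t0"
  define V where "V = prodm (2^n) (rev (map (\<lambda>(x, y). propag (2^n) u x y) (filter (\<lambda>(x, y). x < y) (zip t0 t0'))))"
  define S where "S = prop_tuple (2^n) u (map2 max t0 t0')"
  have IH: "X = V * S"
    using snoc.IH[OF len sorted range(1,2)] by (simp add: X_def V_def S_def)
  have "V \<in> carrier_mat (2^n) (2^n)"
    unfolding V_def by (rule prodm_carrier_mat) (auto intro!: propag_carrier_mat dest!: pairs)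
  note carrier = prop_tuple_carrier_mat[OF range(1), folded X_def] this
    prop_tuple_carrier_mat[OF range_max, folded S_def]
  show ?case
  proof (cases "a < b")
    case False
    then have "max a b = a"
      by simp
    then show ?thesis
      using False IH carrier range range_max
      by (simp add: t' len prop_tuple_snoc X_def[symmetric] V_def[symmetric] S_def[symmetric]
          assoc_mult_mat[of _ "2^n" "2^n" _ "2^n" _ "2^n"] propag_carrier_mat)
  next
    case True
    let ?Q = "propag (2^n) u a b" and ?R = "propag (2^n) u b a"
    let ?Pa = "propag (2^n) u a 0" and ?Pb = "propag (2^n) u b 0"
    have "?Q \<in> carrier_mat (2^n) (2^n)" "?R \<in> carrier_mat (2^n) (2^n)"
      "?Pa \<in> carrier_mat (2^n) (2^n)" "?Pb \<in> carrier_mat (2^n) (2^n)"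
      using range by (auto intro: propag_carrier_mat)
    note carrier = carrier this
    have "X * ?Pa = (?Q * ?R) * (X * ?Pa)"
      using True range carrier by (simp add: propag_inverse)
    also have "\<dots> = ?Q * ((?R * X) * ?Pa)"
      using carrier by (simp add: assoc_mult_mat[of _ "2^n" "2^n" _ "2^n" _ "2^n"])
    also have "\<dots> = ?Q * (X * (?R * ?Pa))"
      using True range below carrier
      by (simp add: X_def propag_commute_prop_tuple assoc_mult_mat[of _ "2^n" "2^n" _ "2^n" _ "2^n"])
    also have "\<dots> = (?Q * V) * (S * ?Pb)"
      using True range carrier IH
      by (simp add: propag_split[of 0 a b] assoc_mult_mat[of _ "2^n" "2^n" _ "2^n" _ "2^n"])
    finally show ?thesis
      using True range range_max
      by (simp add: t' len prop_tuple_snoc X_def[symmetric] V_def[symmetric] S_def[symmetric])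
  qed
qed

end

theorem lemmaA1:
  fixes n M :: nat and u :: "nat \<Rightarrow> complex mat" and t t' :: "nat list"
  assumes unit: "\<And>k. k < n - 1 \<Longrightarrow> unitary_mat (2^n) (u k)"
    and local: "\<And>k. k < n - 1 \<Longrightarrow> acts_on_qubits n k (u k)"
    and lt: "length t = M" and lt': "length t' = M"
    and inc: "sorted_wrt (<) t" and inc': "sorted_wrt (<) t'"
    and rng: "set t \<subseteq> {0..n-1}" and rng': "set t' \<subseteq> {0..n-1}"
  shows "prop_tuple (2^n) u t =
           prodm (2^n) (rev (map (\<lambda>j. propag (2^n) u (t!j) (t'!j)) (filter (\<lambda>j. t!j < t'!j) [0..<M])))
           * prop_tuple (2^n) u (map2 max t t')
       \<and> prop_tuple (2^n) u t' =
           prodm (2^n) (rev (map (\<lambda>j. propag (2^n) u (t'!j) (t!j)) (filter (\<lambda>j. t!j > t'!j) [0..<M])))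
           * prop_tuple (2^n) u (map2 max t t')"
proof -
  interpret nearest_neighbour_circuit n u
    using unit local by unfold_locales
  have len: "length t = length t'"
    using lt lt' by simp
  have "map2 max t' t = map2 max t t'"
    using len by (simp add: list_eq_iff_nth_eq max.commute)
  then show ?thesis
    using prop_tuple_factor_max[OF len inc rng rng'] prop_tuple_factor_max[OF len[symmetric] inc' rng' rng]
      map_filter_nth_upt_eq_zip[OF len, of "propag (2^n) u" "(<)"]
      map_filter_nth_upt_eq_zip[OF len[symmetric], of "propag (2^n) u" "(<)"]
    by (simp only: lt lt')
qed

end
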